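(* Let $f:\mathbb{R}^d\to\mathbb{R}$ satisfy: $f$ is continuously differentiable on the level set $L(\mathbf{x}_1)=\{\mathbf{z}: f(\mathbf{z})\le f(\mathbf{x}_1)\}$, bounded below on it, and $\nabla f$ is $L$-Lipschitz on it. Run the Linear UCB Method (described in the context) with regularizer $\lambda>0$ and memory parameter $M\ge 0$. Then for each $k=1,2,\dots,K$ and every $\mathbf{s}\in\mathbb{R}^d$ with $\|\mathbf{s}\|=1$, $$\big|\mathbf{s}^\top(\nabla f(\mathbf{x}_k)-\mathbf{g}_k)\big|\le\sqrt{\frac{d(M+1)}{\lambda}}\sum_{i=\ell(k)}^{k-1}\|\nabla f(\mathbf{x}_i)-\nabla f(\mathbf{x}_{i+1})\|+\sqrt{\lambda}\,\|\nabla f(\mathbf{x}_k)\|\,\|\mathbf{s}\|_{\mathbf{C}_k^{-1}},$$ where $\ell(k):=\max\{1,k-M-1\}$ and the summation is interpreted as $0$ when $k=1$.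
   Context: For a positive definite matrix $\mathbf{A}$, $\|\mathbf{x}\|_{\mathbf{A}}:=(\mathbf{x}^\top\mathbf{A}\mathbf{x})^{1/2}$. Linear UCB Method: inputs are an initial point $\mathbf{x}_1$, horizon $K$, regularizer $\lambda>0$, stepsizes $\alpha_k>0$, and an integer memory parameter $M\ge0$. Initialize $\mathbf{C}_1=\lambda\mathbf{I}_d$, $\mathbf{b}_1=\mathbf{0}$, $\mathbf{g}_1=\mathbf{0}$. For $k=1,\dots,K$: choose some $U_k\ge\|\nabla f(\mathbf{x}_k)\|$; let $\mathbf{s}_k$ be a maximizer of $\mathbf{g}_k^\top\mathbf{s}+\sqrt{\lambda}U_k\|\mathbf{s}\|_{\mathbf{C}_k^{-1}}$ over $\{\mathbf{s}:\|\mathbf{s}\|=1\}$; set $r_k=\langle\nabla f(\mathbf{x}_k),\mathbf{s}_k\rangle$; set $\mathbf{C}_{k+1}=\lambda\mathbf{I}_d+\sum_{j=\max\{1,k-M\}}^{k}\mathbf{s}_j\mathbf{s}_j^\top$, $\mathbf{b}_{k+1}=\sum_{j=\max\{1,k-M\}}^{k}r_j\mathbf{s}_j$, $\mathbf{g}_{k+1}=\mathbf{C}_{k+1}^{-1}\mathbf{b}_{k+1}$; and set $\mathbf{x}_{k+1}=\mathbf{x}_k-\alpha_kr_k\mathbf{s}_k$. *)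

theory Defs
  imports "HOL-Analysis.Analysis"
begin

definition outer :: "real^'n \<Rightarrow> real^'n \<Rightarrow> real^'n^'n" where
  "outer u v = (\<chi> i j. u $ i * v $ j)"

definition anorm :: "real^'n^'n \<Rightarrow> real^'n \<Rightarrow> real" where
  "anorm A x = sqrt (x \<bullet> (A *v x))"

text \<open>Linear UCB quantities, indices starting at 1.
  C_k = lam I + sum_{j = max 1 (k-1-M)}^{k-1} s_j s_j^T   (so C_1 = lam I),
  b_k = sum_{j = max 1 (k-1-M)}^{k-1} r_j s_j             (so b_1 = 0),
  g_k = C_k^{-1} b_k.\<close>
definition ucb_C :: "real \<Rightarrow> nat \<Rightarrow> (nat \<Rightarrow> real^'n) \<Rightarrow> nat \<Rightarrow> real^'n^'n" where
  "ucb_C lam M s k = lam *\<^sub>R mat 1 + (\<Sum>j = max 1 (k - 1 - M)..k - 1. outer (s j) (s j))"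

definition ucb_b :: "nat \<Rightarrow> (nat \<Rightarrow> real^'n) \<Rightarrow> (nat \<Rightarrow> real) \<Rightarrow> nat \<Rightarrow> real^'n" where
  "ucb_b M s r k = (\<Sum>j = max 1 (k - 1 - M)..k - 1. r j *\<^sub>R s j)"

definition ucb_g :: "real \<Rightarrow> nat \<Rightarrow> (nat \<Rightarrow> real^'n) \<Rightarrow> (nat \<Rightarrow> real) \<Rightarrow> nat \<Rightarrow> real^'n" where
  "ucb_g lam M s r k = matrix_inv (ucb_C lam M s k) *v ucb_b M s r k"

end

theory Submission imports Defs begin

(* With a_j = G (x j) and r_j = a_j \<bullet> s_j, the vector b_k equals
   (C_k - lam I) a_k + \<Sum>_j ((a_j - a_k) \<bullet> s_j) s_j, summed over the window of at most M + 1
   past indices.  Hence, for u = C_k^-1 t and by symmetry of C_k,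
     t \<bullet> (a_k - g_k) = lam (u \<bullet> a_k) - \<Sum>_j ((a_j - a_k) \<bullet> s_j) (s_j \<bullet> u).
   Both terms are controlled by |t|_(C_k^-1)^2 = u \<bullet> C_k u = lam |u|^2 + \<Sum>_j (s_j \<bullet> u)^2:
   it gives lam |u| \<le> sqrt lam |t|_(C_k^-1) for the first term, and together with
   Cauchy-Schwarz over the window and |t|_(C_k^-1)^2 \<le> |t|^2 / lam it bounds the second by
   sqrt ((M + 1) / lam) times the path length of the a_i through the window. *)

lemma sum_matrix_vector_mult:
  "(\<Sum>j\<in>J. A j) *v (x::'a::comm_semiring_1^'n) = (\<Sum>j\<in>J. A j *v x)"
  by (induction J rule: infinite_finite_induct) (auto simp: matrix_vector_mult_add_rdistrib)

lemma outer_mult_vec: "outer u v *v w = (v \<bullet> w) *\<^sub>R u"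
  by (simp add: vec_eq_iff matrix_vector_mult_def outer_def inner_vec_def sum_distrib_left mult_ac)

lemma invertible_mult_matrix_inv_vec:
  fixes A :: "'a::field^'n^'n"
  assumes "invertible A"
  shows "A *v (matrix_inv A *v w) = w"
proof -
  have "A ** matrix_inv A = mat 1"
    using assms unfolding invertible_def matrix_inv_def by (rule someI2_ex) blast
  then show ?thesis
    by (simp add: matrix_vector_mul_assoc)
qed

lemma norm_diff_le_sum_steps:
  fixes a :: "nat \<Rightarrow> 'a::real_normed_vector"
  assumes "j \<le> k"
  shows "norm (a j - a k) \<le> (\<Sum>i = j..<k. norm (a i - a (Suc i)))"
proof -
  have "a j - a k = (\<Sum>i = j..<k. (- a (Suc i)) - (- a i))"
    using sum_Suc_diff'[OF assms, of "\<lambda>i. - a i"] by simp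
  also have "norm \<dots> \<le> (\<Sum>i = j..<k. norm (a i - a (Suc i)))"
    by (rule order_trans[OF norm_sum]) (simp add: norm_minus_commute)
  finally show ?thesis .
qed

definition reg_gram :: "real \<Rightarrow> ('a \<Rightarrow> real^'n) \<Rightarrow> 'a set \<Rightarrow> real^'n^'n" where
  "reg_gram lam v J = lam *\<^sub>R mat 1 + (\<Sum>j\<in>J. outer (v j) (v j))"

lemma reg_gram_mult_vec:
  "reg_gram lam v J *v w = lam *\<^sub>R w + (\<Sum>j\<in>J. (v j \<bullet> w) *\<^sub>R v j)"
  by (simp add: reg_gram_def matrix_vector_mult_add_rdistrib sum_matrix_vector_mult outer_mult_vec
      flip: scaleR_matrix_vector_assoc)

lemma reg_gram_symmetric: "(reg_gram lam v J *v u) \<bullet> w = u \<bullet> (reg_gram lam v J *v w)"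
  by (simp add: reg_gram_mult_vec inner_add_left inner_add_right inner_sum_left inner_sum_right
      inner_commute mult.commute)

lemma reg_gram_quadratic_form:
  "u \<bullet> (reg_gram lam v J *v u) = lam * (norm u)\<^sup>2 + (\<Sum>j\<in>J. (v j \<bullet> u)\<^sup>2)"
  unfolding reg_gram_mult_vec power2_norm_eq_inner
  by (simp add: inner_add_right inner_sum_right inner_commute power2_eq_square)

lemma reg_gram_quadratic_form_ge:
  "lam * (norm u)\<^sup>2 \<le> u \<bullet> (reg_gram lam v J *v u)"
  by (simp add: reg_gram_quadratic_form sum_nonneg)

lemma invertible_reg_gram:
  assumes "lam > 0"
  shows "invertible (reg_gram lam v J)"
proof -
  have "x = 0" if "reg_gram lam v J *v x = 0" for x
    using reg_gram_quadratic_form_ge[of lam x v J] that assms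
    by (simp add: mult_le_0_iff)
  then show ?thesis
    using matrix_left_invertible_ker invertible_left_inverse by blast
qed

lemma reg_gram_inv_inner:
  assumes "lam > 0"
  shows "t \<bullet> (matrix_inv (reg_gram lam v J) *v y) = (matrix_inv (reg_gram lam v J) *v t) \<bullet> y"
  using reg_gram_symmetric[of lam v J "matrix_inv (reg_gram lam v J) *v t"]
  by (simp add: invertible_mult_matrix_inv_vec invertible_reg_gram assms)

lemma reg_gram_inv_anorm_sq:
  fixes lam :: real and v :: "'a \<Rightarrow> real^'n" and J :: "'a set" and t :: "real^'n"
  assumes "lam > 0"
  defines "u \<equiv> matrix_inv (reg_gram lam v J) *v t"
  shows "(anorm (matrix_inv (reg_gram lam v J)) t)\<^sup>2 = t \<bullet> u"
    and "t \<bullet> u = lam * (norm u)\<^sup>2 + (\<Sum>j\<in>J. (v j \<bullet> u)\<^sup>2)"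
proof -
  have t: "t = reg_gram lam v J *v u"
    by (simp add: u_def invertible_mult_matrix_inv_vec invertible_reg_gram assms)
  then show quad: "t \<bullet> u = lam * (norm u)\<^sup>2 + (\<Sum>j\<in>J. (v j \<bullet> u)\<^sup>2)"
    by (simp add: inner_commute reg_gram_quadratic_form)
  then have "0 \<le> t \<bullet> u"
    using assms by (simp add: sum_nonneg)
  then show "(anorm (matrix_inv (reg_gram lam v J)) t)\<^sup>2 = t \<bullet> u"
    by (simp add: anorm_def u_def)
qed

lemma reg_gram_inv_norm_le:
  fixes lam :: real and v :: "'a \<Rightarrow> real^'n" and J :: "'a set" and t :: "real^'n"
  assumes "lam > 0"
  shows "lam * norm (matrix_inv (reg_gram lam v J) *v t)
    \<le> sqrt lam * anorm (matrix_inv (reg_gram lam v J)) t"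
proof -
  let ?u = "matrix_inv (reg_gram lam v J) *v t"
  have "lam * (norm ?u)\<^sup>2 \<le> t \<bullet> ?u"
    using reg_gram_inv_anorm_sq(2)[OF assms, where v=v and J=J and t=t] by (simp add: sum_nonneg)
  then have "(lam * norm ?u)\<^sup>2 \<le> lam * (t \<bullet> ?u)"
    using mult_left_mono[of _ _ lam] assms by (simp add: power2_eq_square mult_ac)
  then have "lam * norm ?u \<le> sqrt (lam * (t \<bullet> ?u))"
    by (rule real_le_rsqrt)
  then show ?thesis
    by (simp add: real_sqrt_mult anorm_def)
qed

lemma reg_gram_inv_anorm_sq_le:
  fixes lam :: real and v :: "'a \<Rightarrow> real^'n" and J :: "'a set" and t :: "real^'n"
  assumes "lam > 0"
  shows "(anorm (matrix_inv (reg_gram lam v J)) t)\<^sup>2 \<le> (norm t)\<^sup>2 / lam"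
proof -
  let ?u = "matrix_inv (reg_gram lam v J) *v t"
  have tu: "t \<bullet> ?u \<le> norm t * norm ?u"
    using norm_cauchy_schwarz by blast
  have "lam * (norm ?u)\<^sup>2 \<le> t \<bullet> ?u"
    using reg_gram_inv_anorm_sq(2)[OF assms, where v=v and J=J and t=t] by (simp add: sum_nonneg)
  with tu have "lam * norm ?u * norm ?u \<le> norm t * norm ?u"
    by (simp add: power2_eq_square mult.assoc)
  then have "lam * norm ?u \<le> norm t"
    by (cases "?u = 0") (simp_all add: mult_le_cancel_right_pos)
  then have "norm ?u \<le> norm t / lam"
    using assms by (simp add: pos_le_divide_eq mult.commute)
  with tu have "t \<bullet> ?u \<le> norm t * (norm t / lam)"
    by (meson mult_left_mono norm_ge_zero order_trans)
  then show ?thesis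
    unfolding reg_gram_inv_anorm_sq(1)[OF assms] by (simp add: power2_eq_square)
qed

lemma reg_gram_inv_sum_abs_proj_le:
  fixes lam :: real and v :: "'a \<Rightarrow> real^'n" and J :: "'a set" and t :: "real^'n"
  assumes "lam > 0"
  shows "(\<Sum>j\<in>J. \<bar>v j \<bullet> (matrix_inv (reg_gram lam v J) *v t)\<bar>) \<le> sqrt (card J / lam) * norm t"
proof -
  let ?u = "matrix_inv (reg_gram lam v J) *v t"
  have "(\<Sum>j\<in>J. \<bar>v j \<bullet> ?u\<bar>)\<^sup>2 \<le> (\<Sum>j\<in>J. (v j \<bullet> ?u)\<^sup>2) * card J"
    using sum_squared_le_sum_of_squares[of "\<lambda>j. \<bar>v j \<bullet> ?u\<bar>" J] by simp
  also have "\<dots> \<le> (anorm (matrix_inv (reg_gram lam v J)) t)\<^sup>2 * card J"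
    using reg_gram_inv_anorm_sq[OF assms, where v=v and J=J and t=t] assms by (intro mult_right_mono) auto
  also have "\<dots> \<le> (norm t)\<^sup>2 / lam * card J"
    by (intro mult_right_mono reg_gram_inv_anorm_sq_le assms) simp
  also have "\<dots> = card J / lam * (norm t)\<^sup>2"
    by simp
  finally have "(\<Sum>j\<in>J. \<bar>v j \<bullet> ?u\<bar>) \<le> sqrt (card J / lam * (norm t)\<^sup>2)"
    by (rule real_le_rsqrt)
  also have "\<dots> = sqrt (card J / lam) * norm t"
    by (simp only: real_sqrt_mult real_sqrt_abs abs_norm_cancel)
  finally show ?thesis .
qed

lemma reg_gram_inv_estimation_error:
  fixes lam :: real and v w :: "'a \<Rightarrow> real^'n" and J :: "'a set" and a t :: "real^'n"
  assumes lam_pos: "lam > 0"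
  defines "u \<equiv> matrix_inv (reg_gram lam v J) *v t"
  shows "t \<bullet> (a - matrix_inv (reg_gram lam v J) *v (\<Sum>j\<in>J. (w j \<bullet> v j) *\<^sub>R v j))
    = lam * (u \<bullet> a) - (\<Sum>j\<in>J. ((w j - a) \<bullet> v j) * (v j \<bullet> u))"
proof -
  have "(\<Sum>j\<in>J. (w j \<bullet> v j) *\<^sub>R v j)
      = (\<Sum>j\<in>J. (a \<bullet> v j) *\<^sub>R v j) + (\<Sum>j\<in>J. ((w j - a) \<bullet> v j) *\<^sub>R v j)"
    by (simp add: inner_diff_left scaleR_diff_left sum_subtractf)
  also have "(\<Sum>j\<in>J. (a \<bullet> v j) *\<^sub>R v j) = reg_gram lam v J *v a - lam *\<^sub>R a"
    by (simp add: reg_gram_mult_vec inner_commute)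
  finally have b: "(\<Sum>j\<in>J. (w j \<bullet> v j) *\<^sub>R v j)
      = reg_gram lam v J *v a - lam *\<^sub>R a + (\<Sum>j\<in>J. ((w j - a) \<bullet> v j) *\<^sub>R v j)" .
  have Ca: "u \<bullet> (reg_gram lam v J *v a) = t \<bullet> a"
    by (simp add: u_def flip: reg_gram_symmetric)
      (simp add: invertible_mult_matrix_inv_vec invertible_reg_gram lam_pos)
  have "u \<bullet> (\<Sum>j\<in>J. (w j \<bullet> v j) *\<^sub>R v j)
      = t \<bullet> a - lam * (u \<bullet> a) + (\<Sum>j\<in>J. ((w j - a) \<bullet> v j) * (v j \<bullet> u))"
    unfolding b inner_add_right inner_diff_right Ca
    by (simp add: inner_sum_right inner_commute[of u])
  then show ?thesis
    by (simp add: reg_gram_inv_inner[OF lam_pos] inner_diff_right flip: u_def)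
qed

lemma reg_gram_inv_estimation_error_le:
  fixes lam e :: real and v w :: "'a \<Rightarrow> real^'n" and J :: "'a set" and a t :: "real^'n"
  assumes lam_pos: "lam > 0" and e_nonneg: "0 \<le> e"
    and unit: "\<forall>j\<in>J. norm (v j) \<le> 1" and close: "\<forall>j\<in>J. norm (w j - a) \<le> e"
  shows "\<bar>t \<bullet> (a - matrix_inv (reg_gram lam v J) *v (\<Sum>j\<in>J. (w j \<bullet> v j) *\<^sub>R v j))\<bar>
    \<le> e * sqrt (card J / lam) * norm t + sqrt lam * norm a * anorm (matrix_inv (reg_gram lam v J)) t"
proof -
  let ?u = "matrix_inv (reg_gram lam v J) *v t"
  have "\<bar>lam * (?u \<bullet> a)\<bar> \<le> lam * norm ?u * norm a"
    using Cauchy_Schwarz_ineq2[of ?u a] lam_pos by (simp add: abs_mult)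
  also have "\<dots> \<le> sqrt lam * anorm (matrix_inv (reg_gram lam v J)) t * norm a"
    by (intro mult_right_mono reg_gram_inv_norm_le lam_pos) simp
  finally have first: "\<bar>lam * (?u \<bullet> a)\<bar>
      \<le> sqrt lam * norm a * anorm (matrix_inv (reg_gram lam v J)) t"
    by (simp add: mult_ac)
  have "\<bar>(w j - a) \<bullet> v j\<bar> \<le> e" if "j \<in> J" for j
  proof -
    have "norm (w j - a) * norm (v j) \<le> e * 1"
      using unit close that e_nonneg by (intro mult_mono) auto
    then show ?thesis
      using Cauchy_Schwarz_ineq2[of "w j - a" "v j"] by simp
  qed
  then have "\<bar>\<Sum>j\<in>J. ((w j - a) \<bullet> v j) * (v j \<bullet> ?u)\<bar> \<le> (\<Sum>j\<in>J. e * \<bar>v j \<bullet> ?u\<bar>)"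
    by (intro order_trans[OF sum_abs] sum_mono) (simp add: abs_mult mult_right_mono)
  also have "\<dots> \<le> e * (sqrt (card J / lam) * norm t)"
    by (simp add: sum_distrib_left[symmetric] mult_left_mono e_nonneg
        reg_gram_inv_sum_abs_proj_le lam_pos)
  finally show ?thesis
    using first by (simp add: reg_gram_inv_estimation_error[OF lam_pos] mult_ac)
qed

definition ucb_window :: "nat \<Rightarrow> nat \<Rightarrow> nat set" where
  "ucb_window M k = {max 1 (k - 1 - M)..k - 1}"

lemma ucb_C_eq_reg_gram: "ucb_C lam M s k = reg_gram lam s (ucb_window M k)"
  by (simp add: ucb_C_def reg_gram_def ucb_window_def)

lemma card_ucb_window_le: "card (ucb_window M k) \<le> M + 1"
  by (simp add: ucb_window_def)

lemma ucb_window_drift_le: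
  fixes a :: "nat \<Rightarrow> 'a::real_normed_vector"
  assumes "j \<in> ucb_window M k"
  shows "norm (a j - a k) \<le> (\<Sum>i = max 1 (k - M - 1)..k - 1. norm (a i - a (i + 1)))"
proof -
  have "norm (a j - a k) \<le> (\<Sum>i = j..<k. norm (a i - a (i + 1)))"
    using norm_diff_le_sum_steps[of j k a] assms by (auto simp: ucb_window_def)
  also have "\<dots> \<le> (\<Sum>i = max 1 (k - M - 1)..k - 1. norm (a i - a (i + 1)))"
    using assms by (intro sum_mono2) (auto simp: ucb_window_def)
  finally show ?thesis .
qed

theorem lemma3:
  fixes f :: "real^'n \<Rightarrow> real" and G :: "real^'n \<Rightarrow> real^'n"
    and x s :: "nat \<Rightarrow> real^'n" and r U \<alpha> :: "nat \<Rightarrow> real"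
    and K M :: nat and lam Lc :: real
  assumes diff: "\<forall>z\<in>{z. f z \<le> f (x 1)}. (f has_derivative (\<lambda>h. G z \<bullet> h)) (at z)"
    and cont: "continuous_on {z. f z \<le> f (x 1)} G"
    and bdd: "bdd_below (f ` {z. f z \<le> f (x 1)})"
    and lip: "\<forall>y\<in>{z. f z \<le> f (x 1)}. \<forall>z\<in>{z. f z \<le> f (x 1)}. norm (G y - G z) \<le> Lc * norm (y - z)"
    and lam_pos: "lam > 0"
    and alpha_pos: "\<forall>k\<in>{1..K}. \<alpha> k > 0"
    and U_ge: "\<forall>k\<in>{1..K}. U k \<ge> norm (G (x k))"
    and s_unit: "\<forall>k\<in>{1..K}. norm (s k) = 1"
    and s_max: "\<forall>k\<in>{1..K}. \<forall>t. norm t = 1 \<longrightarrow>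
        ucb_g lam M s r k \<bullet> t + sqrt lam * U k * anorm (matrix_inv (ucb_C lam M s k)) t
        \<le> ucb_g lam M s r k \<bullet> s k + sqrt lam * U k * anorm (matrix_inv (ucb_C lam M s k)) (s k)"
    and r_def: "\<forall>k\<in>{1..K}. r k = G (x k) \<bullet> s k"
    and x_step: "\<forall>k\<in>{1..K}. x (k + 1) = x k - (\<alpha> k * r k) *\<^sub>R s k"
  shows "\<forall>k\<in>{1..K}. \<forall>t::real^'n. norm t = 1 \<longrightarrow>
    \<bar>t \<bullet> (G (x k) - ucb_g lam M s r k)\<bar>
      \<le> sqrt (real CARD('n) * (real M + 1) / lam)
          * (\<Sum>i = max 1 (k - M - 1)..k - 1. norm (G (x i) - G (x (i + 1))))
        + sqrt lam * norm (G (x k)) * anorm (matrix_inv (ucb_C lam M s k)) t"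
proof (intro ballI allI impI)
  fix k and t :: "real^'n"
  assume k: "k \<in> {1..K}" and t: "norm t = 1"
  let ?J = "ucb_window M k"
  let ?S = "\<Sum>i = max 1 (k - M - 1)..k - 1. norm (G (x i) - G (x (i + 1)))"
  have J_sub: "?J \<subseteq> {1..K}"
    using k by (auto simp: ucb_window_def)
  have b_eq: "ucb_b M s r k = (\<Sum>j\<in>?J. (G (x j) \<bullet> s j) *\<^sub>R s j)"
    unfolding ucb_b_def ucb_window_def[symmetric] using r_def J_sub by (intro sum.cong) auto
  have unit: "\<forall>j\<in>?J. norm (s j) \<le> 1"
    using s_unit J_sub by auto
  have drift: "\<forall>j\<in>?J. norm (G (x j) - G (x k)) \<le> ?S"
    using ucb_window_drift_le[where a="\<lambda>i. G (x i)"] by blast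
  have "0 \<le> ?S"
    by (simp add: sum_nonneg)
  have err: "\<bar>t \<bullet> (G (x k) - ucb_g lam M s r k)\<bar>
      \<le> ?S * sqrt (card ?J / lam) + sqrt lam * norm (G (x k)) * anorm (matrix_inv (ucb_C lam M s k)) t"
    using reg_gram_inv_estimation_error_le[OF lam_pos \<open>0 \<le> ?S\<close> unit drift, where t=t] t
    by (simp add: ucb_g_def ucb_C_eq_reg_gram b_eq)
  have "real (card ?J) \<le> 1 * (real M + 1)"
    using card_ucb_window_le[of M k] by simp
  also have "\<dots> \<le> real CARD('n) * (real M + 1)"
    using zero_less_card_finite[where 'a='n] by (intro mult_right_mono) linarith+
  finally have "sqrt (card ?J / lam) \<le> sqrt (real CARD('n) * (real M + 1) / lam)"
    using lam_pos by (simp add: divide_right_mono)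
  with err \<open>0 \<le> ?S\<close> show "\<bar>t \<bullet> (G (x k) - ucb_g lam M s r k)\<bar>
      \<le> sqrt (real CARD('n) * (real M + 1) / lam) * ?S
        + sqrt lam * norm (G (x k)) * anorm (matrix_inv (ucb_C lam M s k)) t"
    by (smt (verit) mult_left_mono mult.commute)
qed

end
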